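(* Let $S_f=\{f_i\ge0: i=1,\ldots,m\}$ be an inequality set in $\mathbf{x}=(x_1,\ldots,x_n)$. Let $I\subseteq\{1,\ldots,m\}$ be the set of indices $k$ such that $f_k=0$ is an implied equality of $S_f$, let $E=\{f_k=0: k\in I\}$, and let $\widetilde{E}=\{x_{k_i}-U_i=0: i=1,\ldots,\tilde n\}$ be the Gauss–Jordan reduced form of $E$ with respect to the variable order $x_1\prec\cdots\prec x_n$. Let $R_f$ be the set of nonzero polynomials among those obtained from $f_j$, $j\in\{1,\ldots,m\}\setminus I$, by substituting $U_i$ for $x_{k_i}$ for every $i=1,\ldots,\tilde n$. Then the inequality set $\{g\ge 0: g\in R_f\}$ is a pure inequality set.
   Context: An inequality set is a finite set $S=\{f_i\ge 0: i=1,\ldots,m\}$ with each $f_i$ a nonzero homogeneous linear polynomial in $\mathbf{x}$ with real coefficients; its solutions are the points of $\mathbb{R}^n$ satisfying all inequalities. The equality $f_k=0$ is an implied equality of $S$ if $f_k(\mathbf{x})=0$ for every solution $\mathbf{x}$ of $S$; $S$ is pure if it has no implied equalities. For a finite system $E$ of homogeneous linear equations in $\mathbf{x}$ of rank $\tilde n$, its Gauss–Jordan reduced form (reduced row echelon form) with respect to the order $x_1\prec\cdots\prec x_n$ is the unique equivalent system $\{x_{k_i}-U_i=0: i=1,\ldots,\tilde n\}$ with $k_1<\cdots<k_{\tilde n}$, where each $U_i$ is a real linear combination of the non-pivot variables $x_j$, $j\notin\{k_1,\ldots,k_{\tilde n}\}$, $j>k_i$. *)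

theory Defs
  imports Complex_Main
begin

text \<open>A homogeneous linear form in x_0,...,x_{n-1} is represented by its coefficient
  function c :: nat => real (only coefficients below n matter). Variables are
  0-indexed: x_j for j < n, with the order x_0 < x_1 < ... < x_{n-1}.\<close>

definition lin :: "nat \<Rightarrow> (nat \<Rightarrow> real) \<Rightarrow> (nat \<Rightarrow> real) \<Rightarrow> real" where
  "lin n c x = (\<Sum>j<n. c j * x j)"

definition nonzero_form :: "nat \<Rightarrow> (nat \<Rightarrow> real) \<Rightarrow> bool" where
  "nonzero_form n c \<longleftrightarrow> (\<exists>j<n. c j \<noteq> 0)"

definition sols :: "nat \<Rightarrow> (nat \<Rightarrow> real) set \<Rightarrow> (nat \<Rightarrow> real) set" where
  "sols n F = {x. \<forall>c\<in>F. lin n c x \<ge> 0}"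

definition implied_eq :: "nat \<Rightarrow> (nat \<Rightarrow> real) set \<Rightarrow> (nat \<Rightarrow> real) \<Rightarrow> bool" where
  "implied_eq n F c \<longleftrightarrow> (\<forall>x\<in>sols n F. lin n c x = 0)"

definition pure :: "nat \<Rightarrow> (nat \<Rightarrow> real) set \<Rightarrow> bool" where
  "pure n F \<longleftrightarrow> (\<forall>c\<in>F. \<not> implied_eq n F c)"

definition gauss_jordan_form ::
  "nat \<Rightarrow> (nat \<Rightarrow> real) set \<Rightarrow> nat \<Rightarrow> (nat \<Rightarrow> nat) \<Rightarrow> (nat \<Rightarrow> nat \<Rightarrow> real) \<Rightarrow> bool" where
  "gauss_jordan_form n E r k U \<longleftrightarrow>
     (\<forall>i<r. k i < n) \<and>
     (\<forall>i j. i < j \<and> j < r \<longrightarrow> k i < k j) \<and>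
     (\<forall>i<r. \<forall>j. U i j \<noteq> 0 \<longrightarrow> j < n \<and> j \<notin> k ` {..<r} \<and> k i < j) \<and>
     (\<forall>x. (\<forall>e\<in>E. lin n e x = 0) \<longleftrightarrow> (\<forall>i<r. x (k i) - lin n (U i) x = 0))"

definition subst_form ::
  "nat \<Rightarrow> nat \<Rightarrow> (nat \<Rightarrow> nat) \<Rightarrow> (nat \<Rightarrow> nat \<Rightarrow> real) \<Rightarrow> (nat \<Rightarrow> real) \<Rightarrow> (nat \<Rightarrow> real)" where
  "subst_form n r k U c = (\<lambda>j. if j < n \<and> j \<notin> k ` {..<r}
       then c j + (\<Sum>i<r. c (k i) * U i j) else 0)"

end

theory Submission
  imports Defs
begin

text \<open>On the solutions of S_f every implied equality holds, hence so do the Gauss-Jordan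
  equations x_{k_i} = U_i, and substituting U_i for x_{k_i} does not change the value of any
  form there. So every solution of S_f solves R_f, and a solution of S_f on which f_j does
  not vanish (one exists because f_j = 0 is not implied) is a solution of R_f on which the
  substituted form g does not vanish either.\<close>

lemma pure_if_agrees_with_non_implied:
  assumes agree: "\<forall>g\<in>G. \<exists>c\<in>F. \<not> implied_eq n F c \<and> (\<forall>x\<in>sols n F. lin n g x = lin n c x)"
  shows "pure n G"
  unfolding pure_def
proof
  have sols_subset: "sols n F \<subseteq> sols n G"
    using agree unfolding sols_def by fastforce
  fix g assume "g \<in> G"
  then obtain c where "c \<in> F" and c_not_implied: "\<not> implied_eq n F c"
    and c_agrees: "\<forall>x\<in>sols n F. lin n g x = lin n c x"
    using agree by blast
  from c_not_implied obtain x where x: "x \<in> sols n F" and "lin n c x \<noteq> 0"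
    unfolding implied_eq_def by blast
  then have "lin n g x \<noteq> 0" using c_agrees by simp
  with x sols_subset show "\<not> implied_eq n G g"
    unfolding implied_eq_def by blast
qed

lemma lin_subst_form:
  assumes inj: "inj_on k {..<r}" and pivots: "k ` {..<r} \<subseteq> {..<n}"
    and U_support: "\<And>i j. i < r \<Longrightarrow> U i j \<noteq> 0 \<Longrightarrow> j < n \<and> j \<notin> k ` {..<r}"
    and pivot_eqs: "\<And>i. i < r \<Longrightarrow> x (k i) = lin n (U i) x"
  shows "lin n (subst_form n r k U c) x = lin n c x"
proof -
  let ?K = "k ` {..<r}"
  have U_free: "(\<Sum>j\<in>{..<n} - ?K. U i j * x j) = x (k i)" if "i < r" for i
  proof -
    have "(\<Sum>j\<in>{..<n} - ?K. U i j * x j) = (\<Sum>j<n. U i j * x j)"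
      by (rule sum.mono_neutral_left) (use U_support that in auto)
    then show ?thesis using pivot_eqs that unfolding lin_def by simp
  qed
  have "lin n (subst_form n r k U c) x
      = (\<Sum>j\<in>{..<n} - ?K. (c j + (\<Sum>i<r. c (k i) * U i j)) * x j)"
    unfolding lin_def subst_form_def by (rule sum.mono_neutral_cong_right) auto
  also have "\<dots> = (\<Sum>j\<in>{..<n} - ?K. c j * x j)
      + (\<Sum>j\<in>{..<n} - ?K. \<Sum>i<r. c (k i) * (U i j * x j))"
    by (simp add: sum.distrib distrib_right sum_distrib_right mult.assoc)
  also have "(\<Sum>j\<in>{..<n} - ?K. \<Sum>i<r. c (k i) * (U i j * x j))
      = (\<Sum>i<r. c (k i) * (\<Sum>j\<in>{..<n} - ?K. U i j * x j))"
    by (simp add: sum.swap[of _ "{..<r}"] sum_distrib_left)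
  also have "\<dots> = (\<Sum>i<r. c (k i) * x (k i))"
    using U_free by simp
  also have "\<dots> = (\<Sum>j\<in>?K. c j * x j)"
    using sum.reindex[OF inj, of "\<lambda>j. c j * x j"] by simp
  also have "(\<Sum>j\<in>{..<n} - ?K. c j * x j) + (\<Sum>j\<in>?K. c j * x j) = (\<Sum>j<n. c j * x j)"
    using sum.subset_diff[OF pivots, of "\<lambda>j. c j * x j"] by simp
  finally show ?thesis unfolding lin_def .
qed

lemma gauss_jordan_form_lin_subst_form:
  assumes gj: "gauss_jordan_form n E r k U" and x: "\<forall>e\<in>E. lin n e x = 0"
  shows "lin n (subst_form n r k U c) x = lin n c x"
proof (rule lin_subst_form)
  have "strict_mono_on {..<r} k"
    using gj unfolding gauss_jordan_form_def by (auto intro: strict_mono_onI)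
  then show "inj_on k {..<r}"
    by (rule strict_mono_on_imp_inj_on)
  show "k ` {..<r} \<subseteq> {..<n}"
    using gj unfolding gauss_jordan_form_def by auto
  show "\<And>i j. i < r \<Longrightarrow> U i j \<noteq> 0 \<Longrightarrow> j < n \<and> j \<notin> k ` {..<r}"
    using gj unfolding gauss_jordan_form_def by blast
  show "\<And>i. i < r \<Longrightarrow> x (k i) = lin n (U i) x"
    using gj x unfolding gauss_jordan_form_def by auto
qed

theorem theorem5:
  fixes n m r :: nat and f :: "nat \<Rightarrow> nat \<Rightarrow> real"
    and k :: "nat \<Rightarrow> nat" and U :: "nat \<Rightarrow> nat \<Rightarrow> real" and I :: "nat set"
  assumes nz: "\<forall>i<m. nonzero_form n (f i)"
    and I_def: "I = {i. i < m \<and> implied_eq n (f ` {..<m}) (f i)}"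
    and gj: "gauss_jordan_form n (f ` I) r k U"
  shows "pure n {g. \<exists>j\<in>{..<m} - I. g = subst_form n r k U (f j) \<and> nonzero_form n g}"
proof (rule pure_if_agrees_with_non_implied, safe)
  fix j assume j: "j < m" "j \<notin> I"
  have "lin n (subst_form n r k U (f j)) x = lin n (f j) x"
    if "x \<in> sols n (f ` {..<m})" for x
  proof (rule gauss_jordan_form_lin_subst_form[OF gj])
    show "\<forall>e\<in>f ` I. lin n e x = 0"
      using that I_def unfolding implied_eq_def by auto
  qed
  moreover have "\<not> implied_eq n (f ` {..<m}) (f j)"
    using j I_def by auto
  ultimately show "\<exists>c\<in>f ` {..<m}. \<not> implied_eq n (f ` {..<m}) c \<and>
      (\<forall>x\<in>sols n (f ` {..<m}). lin n (subst_form n r k U (f j)) x = lin n c x)"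
    using j by blast
qed

end
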